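(* For each integer $p>2$, there exists a connected $(7p-3)$-regular integral graph with $12p$ vertices.
   Context: A graph is integral if all eigenvalues of its adjacency matrix are integers. *)

theory Defs
  imports Complex_Main "Jordan_Normal_Form.Char_Poly"
begin

text \<open>Finite simple graphs on the vertex set {0..<n}, given by an edge relation E
  (only its restriction to {0..<n} matters).\<close>

definition simple_graph :: "nat \<Rightarrow> (nat \<Rightarrow> nat \<Rightarrow> bool) \<Rightarrow> bool" where
  "simple_graph n E \<longleftrightarrow> (\<forall>i<n. \<forall>j<n. E i j \<longleftrightarrow> E j i) \<and> (\<forall>i<n. \<not> E i i)"

definition adj_matrix :: "nat \<Rightarrow> (nat \<Rightarrow> nat \<Rightarrow> bool) \<Rightarrow> complex mat" where
  "adj_matrix n E = mat n n (\<lambda>(i, j). if E i j then 1 else 0)"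

definition integral_graph :: "nat \<Rightarrow> (nat \<Rightarrow> nat \<Rightarrow> bool) \<Rightarrow> bool" where
  "integral_graph n E \<longleftrightarrow> (\<forall>k. eigenvalue (adj_matrix n E) k \<longrightarrow> k \<in> \<int>)"

definition regular_graph :: "nat \<Rightarrow> (nat \<Rightarrow> nat \<Rightarrow> bool) \<Rightarrow> nat \<Rightarrow> bool" where
  "regular_graph n E d \<longleftrightarrow> (\<forall>i<n. card {j. j < n \<and> E i j} = d)"

definition connected_graph :: "nat \<Rightarrow> (nat \<Rightarrow> nat \<Rightarrow> bool) \<Rightarrow> bool" where
  "connected_graph n E \<longleftrightarrow>
     (\<forall>i<n. \<forall>j<n. (\<lambda>x y. x < n \<and> y < n \<and> E x y)\<^sup>*\<^sup>* i j)"

end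

theory Submission
  imports Defs
begin

text \<open>Read the vertices \<open>i < m\<^sub>1 \<cdot> \<dots> \<cdot> m\<^sub>k\<close> in mixed radix as points of
  \<open>\<int>/m\<^sub>1 \<times> \<dots> \<times> \<int>/m\<^sub>k\<close>, and let adjacency depend only on which coordinates of two
  vertices agree. Splitting off the first coordinate writes such a matrix as
  \<open>X \<otimes> I\<^sub>m + Y \<otimes> J\<^sub>m\<close>, whose eigenvalues are those of \<open>X\<close> and of \<open>X + m Y\<close>; both are again
  of the same shape with one coordinate fewer and integer entries, so by induction all
  eigenvalues are integers. The graph of the theorem is of this shape on
  \<open>\<int>/p \<times> \<int>/3 \<times> \<int>/2 \<times> \<int>/2\<close>; its degree is counted coordinatewise in the same way, and it
  contains every edge that changes a single coordinate, hence is connected.\<close>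

lemma sum_lessThan_mult_split:
  fixes f :: "nat \<Rightarrow> 'a::comm_monoid_add"
  shows "(\<Sum>j<n * m. f j) = (\<Sum>y<n. \<Sum>u<m. f (y * m + u))"
proof -
  have "sum f {y * m..<y * m + m} = (\<Sum>u<m. f (y * m + u))" for y
    using sum.shift_bounds_nat_ivl[of f 0 "y * m" m] by (simp add: atLeast0LessThan add.commute)
  then show ?thesis by (simp add: sum.nat_group[symmetric])
qed

lemma mult_add_less_mult:
  fixes x n t m :: nat
  assumes "x < n" "t < m"
  shows "x * m + t < n * m"
proof -
  have "x * m + t < Suc x * m" using assms by simp
  also have "\<dots> \<le> n * m" using assms by (intro mult_le_mono1) simp
  finally show ?thesis .
qed

lemma rtranclp_map:
  assumes "R\<^sup>*\<^sup>* x y" and "\<And>x y. R x y \<Longrightarrow> S (f x) (f y)"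
  shows "S\<^sup>*\<^sup>* (f x) (f y)"
  using assms(1) by induction (auto intro: rtranclp.rtrancl_into_rtrancl assms(2))

definition has_eigenvalue :: "nat \<Rightarrow> (nat \<Rightarrow> nat \<Rightarrow> complex) \<Rightarrow> complex \<Rightarrow> bool" where
  "has_eigenvalue n K k \<longleftrightarrow>
     (\<exists>v. (\<exists>i<n. v i \<noteq> 0) \<and> (\<forall>i<n. (\<Sum>j<n. K i j * v j) = k * v i))"

lemma eigenvalue_adj_matrix_imp_has_eigenvalue:
  assumes "eigenvalue (adj_matrix n E) k"
  shows "has_eigenvalue n (\<lambda>i j. if E i j then 1 else 0) k"
proof -
  obtain v where v: "v \<in> carrier_vec n" "v \<noteq> 0\<^sub>v n" "adj_matrix n E *\<^sub>v v = k \<cdot>\<^sub>v v"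
    using assms unfolding eigenvalue_def eigenvector_def adj_matrix_def by auto
  show ?thesis
    unfolding has_eigenvalue_def
  proof (intro exI[of _ "\<lambda>i. v $ i"] conjI allI impI)
    show "\<exists>i<n. v $ i \<noteq> 0" using v(1,2) by (auto simp: vec_eq_iff)
    fix i assume i: "i < n"
    have "(adj_matrix n E *\<^sub>v v) $ i = (k \<cdot>\<^sub>v v) $ i" using v(3) by simp
    then show "(\<Sum>j<n. (if E i j then 1 else 0) * v $ j) = k * v $ i"
      using i v(1) by (simp add: adj_matrix_def scalar_prod_def lessThan_atLeast0 row_def)
  qed
qed

lemma sum_tensor_row:
  fixes K X Y :: "nat \<Rightarrow> nat \<Rightarrow> 'a::comm_semiring_0"
  assumes K: "\<And>x y t u. x < n \<Longrightarrow> y < n \<Longrightarrow> t < m \<Longrightarrow> u < m \<Longrightarrow>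
      K (x * m + t) (y * m + u) = (if t = u then X x y else 0) + Y x y"
    and "x < n" "t < m"
  shows "(\<Sum>j<n * m. K (x * m + t) j * v j)
    = (\<Sum>y<n. X x y * v (y * m + t)) + (\<Sum>y<n. Y x y * (\<Sum>u<m. v (y * m + u)))"
proof -
  have "(\<Sum>j<n * m. K (x * m + t) j * v j)
      = (\<Sum>y<n. \<Sum>u<m. K (x * m + t) (y * m + u) * v (y * m + u))"
    by (rule sum_lessThan_mult_split)
  also have "\<dots> = (\<Sum>y<n. \<Sum>u<m. ((if t = u then X x y else 0) + Y x y) * v (y * m + u))"
    using assms by (intro sum.cong refl) simp
  also have "\<dots> = (\<Sum>y<n. X x y * v (y * m + t) + Y x y * (\<Sum>u<m. v (y * m + u)))"
    using \<open>t < m\<close>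
    by (simp add: distrib_right sum.distrib if_distrib[of "\<lambda>c. c * _"] sum_distrib_left
          cong: if_cong)
  finally show ?thesis by (simp add: sum.distrib)
qed

text \<open>An eigenvector \<open>v\<close> of \<open>X \<otimes> I\<^sub>m + Y \<otimes> J\<^sub>m\<close> either has a nonzero vector of block sums
  \<open>w\<close>, which is then an eigenvector of \<open>X + m Y\<close>, or all its block sums vanish, and then
  any nonzero slice \<open>y \<mapsto> v (y m + t)\<close> is an eigenvector of \<open>X\<close>.\<close>

lemma has_eigenvalue_tensor_I_J:
  assumes K: "\<And>x y t u. x < n \<Longrightarrow> y < n \<Longrightarrow> t < m \<Longrightarrow> u < m \<Longrightarrow>
      K (x * m + t) (y * m + u) = (if t = u then X x y else 0) + Y x y"
    and "has_eigenvalue (n * m) K k"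
  shows "has_eigenvalue n X k \<or> has_eigenvalue n (\<lambda>x y. X x y + of_nat m * Y x y) k"
proof -
  obtain v i0 where "i0 < n * m" "v i0 \<noteq> 0"
    and v: "\<And>i. i < n * m \<Longrightarrow> (\<Sum>j<n * m. K i j * v j) = k * v i"
    using assms(2) unfolding has_eigenvalue_def by blast
  define x0 t where "x0 = i0 div m" and "t = i0 mod m"
  have "m > 0" using \<open>i0 < n * m\<close> by (cases m) auto
  then have "x0 < n" "t < m" "v (x0 * m + t) \<noteq> 0"
    using \<open>i0 < n * m\<close> \<open>v i0 \<noteq> 0\<close>
    by (simp_all add: x0_def t_def less_mult_imp_div_less)
  define w where "w y = (\<Sum>u<m. v (y * m + u))" for y
  have row: "k * v (x * m + t) = (\<Sum>y<n. X x y * v (y * m + t)) + (\<Sum>y<n. Y x y * w y)"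
    if "x < n" "t < m" for x t
    using v[OF mult_add_less_mult[OF that]] sum_tensor_row[OF K that, of v] by (simp add: w_def)
  show ?thesis
  proof (cases "\<exists>x<n. w x \<noteq> 0")
    case True
    have "(\<Sum>y<n. (X x y + of_nat m * Y x y) * w y) = k * w x" if "x < n" for x
    proof -
      have swap: "(\<Sum>t<m. \<Sum>y<n. X x y * v (y * m + t)) = (\<Sum>y<n. X x y * w y)"
        by (subst sum.swap) (simp add: w_def sum_distrib_left)
      have "k * w x = (\<Sum>t<m. (\<Sum>y<n. X x y * v (y * m + t)) + (\<Sum>y<n. Y x y * w y))"
        using row[OF that] by (simp add: w_def sum_distrib_left)
      also have "\<dots> = (\<Sum>y<n. X x y * w y) + of_nat m * (\<Sum>y<n. Y x y * w y)"
        by (simp only: sum.distrib swap sum_constant card_lessThan)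
      also have "\<dots> = (\<Sum>y<n. (X x y + of_nat m * Y x y) * w y)"
        by (simp add: distrib_right sum.distrib mult.assoc flip: sum_distrib_left)
      finally show ?thesis ..
    qed
    then have "has_eigenvalue n (\<lambda>x y. X x y + of_nat m * Y x y) k"
      using True unfolding has_eigenvalue_def by (intro exI[of _ w]) blast
    then show ?thesis ..
  next
    case False
    then have "(\<Sum>y<n. X x y * v (y * m + t)) = k * v (x * m + t)" if "x < n" for x
      using row[OF that \<open>t < m\<close>] by simp
    then have "has_eigenvalue n X k"
      using \<open>x0 < n\<close> \<open>v (x0 * m + t) \<noteq> 0\<close> unfolding has_eigenvalue_def
      by (intro exI[of _ "\<lambda>y. v (y * m + t)"]) blast
    then show ?thesis ..
  qed
qed

text \<open>The first modulus is the least significant digit: \<open>i mod m\<close> is the first coordinate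
  of \<open>i\<close> and \<open>i div m\<close> encodes the remaining ones.\<close>

fun digit_agreement :: "nat list \<Rightarrow> nat \<Rightarrow> nat \<Rightarrow> bool list" where
  "digit_agreement [] i j = []"
| "digit_agreement (m # ms) i j = (i mod m = j mod m) # digit_agreement ms (i div m) (j div m)"

lemma digit_agreement_refl: "digit_agreement ms i i = replicate (length ms) True"
  by (induction ms arbitrary: i) simp_all

lemma digit_agreement_commute: "digit_agreement ms i j = digit_agreement ms j i"
  by (induction ms arbitrary: i j) auto

lemma has_eigenvalue_digit_agreement_Ints:
  assumes "\<And>e. g e \<in> \<int>"
    and "has_eigenvalue (prod_list ms) (\<lambda>i j. g (digit_agreement ms i j)) k"
  shows "k \<in> \<int>"
  using assms
proof (induction ms arbitrary: g)
  case Nil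
  then obtain v :: "nat \<Rightarrow> complex" where "v 0 \<noteq> 0" "g [] * v 0 = k * v 0"
    unfolding has_eigenvalue_def by auto
  then show ?case using Nil.prems(1)[of "[]"] by simp
next
  case (Cons m ms)
  let ?X = "\<lambda>x y. g (True # digit_agreement ms x y) - g (False # digit_agreement ms x y)"
  let ?Y = "\<lambda>x y. g (False # digit_agreement ms x y)"
  have "has_eigenvalue (prod_list ms * m) (\<lambda>i j. g (digit_agreement (m # ms) i j)) k"
    using Cons.prems(2) by (simp add: mult.commute)
  then have "has_eigenvalue (prod_list ms) ?X k
      \<or> has_eigenvalue (prod_list ms) (\<lambda>x y. ?X x y + of_nat m * ?Y x y) k"
    by (rule has_eigenvalue_tensor_I_J[rotated]) simp
  then show ?case
    using Cons.IH[of "\<lambda>e. g (True # e) - g (False # e)"]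
      Cons.IH[of "\<lambda>e. g (True # e) - g (False # e) + of_nat m * g (False # e)"]
    by (auto simp: Cons.prems(1))
qed

lemma integral_graph_digit_agreement:
  "integral_graph (prod_list ms) (\<lambda>i j. P (digit_agreement ms i j))"
  unfolding integral_graph_def
proof (intro allI impI)
  fix k assume "eigenvalue (adj_matrix (prod_list ms) (\<lambda>i j. P (digit_agreement ms i j))) k"
  then have "has_eigenvalue (prod_list ms)
      (\<lambda>i j. (\<lambda>e. if P e then 1 else 0) (digit_agreement ms i j)) k"
    by (rule eigenvalue_adj_matrix_imp_has_eigenvalue)
  then show "k \<in> \<int>" by (rule has_eigenvalue_digit_agreement_Ints[rotated]) simp
qed

lemma simple_graph_digit_agreement:
  assumes "\<not> P (replicate (length ms) True)"
  shows "simple_graph n (\<lambda>i j. P (digit_agreement ms i j))"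
  using assms unfolding simple_graph_def by (metis digit_agreement_refl digit_agreement_commute)

fun agreement_degree :: "nat list \<Rightarrow> (bool list \<Rightarrow> bool) \<Rightarrow> nat" where
  "agreement_degree [] P = (if P [] then 1 else 0)"
| "agreement_degree (m # ms) P =
     agreement_degree ms (\<lambda>e. P (True # e)) + (m - 1) * agreement_degree ms (\<lambda>e. P (False # e))"

lemma sum_lessThan_bool_eq:
  fixes f :: "bool \<Rightarrow> nat"
  assumes "t < m"
  shows "(\<Sum>u<m. f (t = u)) = f True + (m - 1) * f False"
proof -
  have "(\<Sum>u<m. f (t = u)) = f True + (\<Sum>u\<in>{..<m} - {t}. f (t = u))"
    using assms by (subst sum.remove[of _ t]) auto
  also have "(\<Sum>u\<in>{..<m} - {t}. f (t = u)) = (\<Sum>u\<in>{..<m} - {t}. f False)"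
    by (intro sum.cong) auto
  finally show ?thesis using assms by simp
qed

lemma card_digit_agreement:
  assumes "i < prod_list ms"
  shows "card {j. j < prod_list ms \<and> P (digit_agreement ms i j)} = agreement_degree ms P"
proof -
  have "(\<Sum>j<prod_list ms. if P (digit_agreement ms i j) then 1 else 0) = agreement_degree ms P"
    using assms
  proof (induction ms arbitrary: i P)
    case (Cons m ms)
    let ?count = "\<lambda>P' y. if P' (digit_agreement ms (i div m) y) then 1 else 0 :: nat"
    have "m > 0" using Cons.prems by (cases m) auto
    then have "i mod m < m" "i div m < prod_list ms"
      using Cons.prems by (simp_all add: less_mult_imp_div_less mult.commute)
    have "(\<Sum>j<prod_list (m # ms). if P (digit_agreement (m # ms) i j) then 1 else 0)
        = (\<Sum>y<prod_list ms. \<Sum>u<m. ?count (\<lambda>e. P ((i mod m = u) # e)) y)"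
      by (simp add: mult.commute[of m] sum_lessThan_mult_split)
    also have "\<dots> = (\<Sum>y<prod_list ms. ?count (\<lambda>e. P (True # e)) y
                                   + (m - 1) * ?count (\<lambda>e. P (False # e)) y)"
      by (intro sum.cong refl) (rule sum_lessThan_bool_eq[OF \<open>i mod m < m\<close>])
    also have "\<dots> = agreement_degree (m # ms) P"
      using Cons.IH[OF \<open>i div m < prod_list ms\<close>, of "\<lambda>e. P (True # e)"]
        Cons.IH[OF \<open>i div m < prod_list ms\<close>, of "\<lambda>e. P (False # e)"]
      by (simp add: sum.distrib flip: sum_distrib_left)
    finally show ?case .
  qed simp
  then show ?thesis by (simp add: sum.If_cases Int_def)
qed

lemma connected_graph_digit_agreement:
  assumes "\<And>k. k < length ms \<Longrightarrow> P ((replicate (length ms) True)[k := False])"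
  shows "connected_graph (prod_list ms) (\<lambda>i j. P (digit_agreement ms i j))"
  using assms unfolding connected_graph_def
proof (induction ms arbitrary: P)
  case (Cons m ms)
  let ?n = "prod_list ms"
  let ?R = "\<lambda>i j. i < prod_list (m # ms) \<and> j < prod_list (m # ms)
                  \<and> P (digit_agreement (m # ms) i j)"
  have path: "(\<lambda>x y. x < ?n \<and> y < ?n \<and> P (True # digit_agreement ms x y))\<^sup>*\<^sup>* x y"
    if "x < ?n" "y < ?n" for x y
    using Cons.IH[of "\<lambda>e. P (True # e)"] Cons.prems[of "Suc k" for k] that by simp
  have edge: "?R (x * m + t) (y * m + u)"
    if "x < ?n" "y < ?n" "t < m" "u < m" "P ((t = u) # digit_agreement ms x y)" for x y t u
    using that mult_add_less_mult[of x ?n t m] mult_add_less_mult[of y ?n u m]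
    by (simp add: mult.commute[of m])
  show ?case
  proof (intro allI impI)
    fix i j assume i: "i < prod_list (m # ms)" and j: "j < prod_list (m # ms)"
    then have "m > 0" by (cases m) auto
    define x y t u where "x = i div m" and "y = j div m" and "t = i mod m" and "u = j mod m"
    have digits: "x < ?n" "y < ?n" "t < m" "u < m"
      using i j \<open>m > 0\<close>
      by (simp_all add: x_def y_def t_def u_def less_mult_imp_div_less mult.commute)
    have "?R\<^sup>*\<^sup>* (x * m + t) (x * m + u)"
      using edge[of x x t u] digits Cons.prems[of 0]
      by (cases "t = u") (auto simp: digit_agreement_refl)
    also have "?R\<^sup>*\<^sup>* (x * m + u) (y * m + u)"
      using path[OF digits(1,2)]
      by (rule rtranclp_map[where f = "\<lambda>z. z * m + u"]) (use edge digits in auto)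
    finally show "?R\<^sup>*\<^sup>* i j" by (simp add: x_def y_def t_def u_def)
  qed
qed simp

text \<open>Vertices are \<open>(s, c, b, a) \<in> \<int>/p \<times> \<int>/3 \<times> \<int>/2 \<times> \<int>/2\<close>. With equal \<open>s\<close>, exactly one
  other coordinate changes (degree \<open>2 + 1 + 1\<close>); with different \<open>s\<close>, either nothing else
  changes or \<open>c\<close> changes and not both of \<open>b, a\<close> (degree \<open>1 + 2 \<cdot> 3\<close> for each of the
  \<open>p - 1\<close> other values of \<open>s\<close>).\<close>

fun adjacency_rule :: "bool list \<Rightarrow> bool" where
  "adjacency_rule [same_s, same_c, same_b, same_a] =
     (if same_s
      then (\<not> same_c \<and> same_b \<and> same_a) \<or> (same_c \<and> \<not> same_b \<and> same_a)
         \<or> (same_c \<and> same_b \<and> \<not> same_a)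
      else (same_c \<and> same_b \<and> same_a) \<or> (\<not> same_c \<and> (same_b \<or> same_a)))"
| "adjacency_rule _ = False"

theorem corollary3p4:
  fixes p :: nat
  assumes "p > 2"
  shows "\<exists>E. simple_graph (12 * p) E \<and> connected_graph (12 * p) E
            \<and> regular_graph (12 * p) E (7 * p - 3) \<and> integral_graph (12 * p) E"
proof (intro exI conjI)
  let ?ms = "[p, 3, 2, 2]"
  let ?E = "\<lambda>i j. adjacency_rule (digit_agreement ?ms i j)"
  have n: "prod_list ?ms = 12 * p" by simp
  show "simple_graph (12 * p) ?E"
    by (rule simple_graph_digit_agreement) simp
  show "connected_graph (12 * p) ?E"
    unfolding n[symmetric]
  proof (rule connected_graph_digit_agreement)
    fix k assume "k < length ?ms"
    then have "k = 0 \<or> k = 1 \<or> k = 2 \<or> k = 3" by auto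
    then show "adjacency_rule ((replicate (length ?ms) True)[k := False])" by auto
  qed
  have "agreement_degree ?ms adjacency_rule = 7 * p - 3"
    using assms by simp
  then show "regular_graph (12 * p) ?E (7 * p - 3)"
    unfolding regular_graph_def n[symmetric] by (intro allI impI) (simp only: card_digit_agreement)
  show "integral_graph (12 * p) ?E"
    using integral_graph_digit_agreement[of ?ms adjacency_rule] by (simp only: n)
qed

end
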